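(* Let $f: B_1(0) \subseteq \mathbb{C} \to \mathbb{R}^3$ be a smooth conformal Willmore immersion with pull-back metric $g = f^*g_{euc} = e^{2u} g_{euc}$. Let $\nu$ be a smooth unit normal field along $f$, $h_{ij}$ the scalar second fundamental form with respect to $\nu$, $H = g^{ij}h_{ij}$ the scalar mean curvature, $h^0_{ij} = h_{ij} - \frac12 H g_{ij}$, and $\varphi := h^0_{11} - i\, h^0_{12}$. Then there is a smooth matrix-valued function $M: B_1(0) \to \mathbb{C}^{2\times 2}$ such that $$\partial_{\bar z} (\varphi, \partial_z H)^T = M \cdot (\varphi, \partial_z H)^T \quad \text{on } B_1(0).$$
   Context: Wirtinger derivatives: $\partial_z = \frac12(\partial_1 - i\partial_2)$, $\partial_{\bar z} = \frac12(\partial_1 + i \partial_2)$. The Willmore functional of an immersion $f$ of a surface into $\mathbb{R}^3$ is $\mathcal{W}(f) = \frac14 \int H^2\, d\mu_g$. A Willmore immersion is a critical point of $\mathcal{W}$; such an immersion satisfies the Euler–Lagrange equation $\Delta_g H + |A^0|_g^2 H = 0$, where $\Delta_g$ is the Laplace–Beltrami operator of $g$ and $A^0 = A - \frac12 \vec{H} g$ is the tracefree second fundamental form. *)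

theory Defs
  imports "HOL-Analysis.Analysis"
begin

text \<open>Domain: the complex plane C = R^2 (coordinates x1 = Re, x2 = Im). Codomain R^3 = real^3.\<close>

text \<open>Directional (partial) derivatives. pd v F x is the Frechet derivative of F at x applied to v;
  partial_1 = pd 1, partial_2 = pd ii.\<close>
definition pd :: "complex \<Rightarrow> (complex \<Rightarrow> 'b::real_normed_vector) \<Rightarrow> complex \<Rightarrow> 'b" where
  "pd v F x = frechet_derivative F (at x) v"

definition coord :: "nat \<Rightarrow> complex" where
  "coord i = (if i = 1 then 1 else \<i>)"

fun Ck :: "nat \<Rightarrow> complex set \<Rightarrow> (complex \<Rightarrow> 'b::real_normed_vector) \<Rightarrow> bool" where
  "Ck 0 S F = continuous_on S F"
| "Ck (Suc k) S F = (F differentiable_on S \<and> (\<forall>v. Ck k S (\<lambda>x. pd v F x)))"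

definition smooth_on :: "complex set \<Rightarrow> (complex \<Rightarrow> 'b::real_normed_vector) \<Rightarrow> bool" where
  "smooth_on S F = (\<forall>k. Ck k S F)"

definition dz :: "(complex \<Rightarrow> complex) \<Rightarrow> complex \<Rightarrow> complex" where
  "dz F x = (pd 1 F x - \<i> * pd \<i> F x) / 2"

definition dzbar :: "(complex \<Rightarrow> complex) \<Rightarrow> complex \<Rightarrow> complex" where
  "dzbar F x = (pd 1 F x + \<i> * pd \<i> F x) / 2"

definition gmet :: "(complex \<Rightarrow> real^3) \<Rightarrow> nat \<Rightarrow> nat \<Rightarrow> complex \<Rightarrow> real" where
  "gmet f i j x = pd (coord i) f x \<bullet> pd (coord j) f x"

definition gdet :: "(complex \<Rightarrow> real^3) \<Rightarrow> complex \<Rightarrow> real" where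
  "gdet f x = gmet f 1 1 x * gmet f 2 2 x - gmet f 1 2 x * gmet f 2 1 x"

definition ginv :: "(complex \<Rightarrow> real^3) \<Rightarrow> nat \<Rightarrow> nat \<Rightarrow> complex \<Rightarrow> real" where
  "ginv f i j x =
     (if i = 1 \<and> j = 1 then gmet f 2 2 x
      else if i = 2 \<and> j = 2 then gmet f 1 1 x
      else - gmet f i j x) / gdet f x"

definition immersion_on :: "complex set \<Rightarrow> (complex \<Rightarrow> real^3) \<Rightarrow> bool" where
  "immersion_on S f = (smooth_on S f \<and>
     (\<forall>x\<in>S. \<forall>a b::real. a *\<^sub>R pd 1 f x + b *\<^sub>R pd \<i> f x = 0 \<longrightarrow> a = 0 \<and> b = 0))"

definition conformal_with :: "complex set \<Rightarrow> (complex \<Rightarrow> real^3) \<Rightarrow> (complex \<Rightarrow> real) \<Rightarrow> bool" where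
  "conformal_with S f u = (\<forall>x\<in>S.
     pd 1 f x \<bullet> pd 1 f x = exp (2 * u x) \<and>
     pd \<i> f x \<bullet> pd \<i> f x = exp (2 * u x) \<and>
     pd 1 f x \<bullet> pd \<i> f x = 0)"

definition unit_normal_on :: "complex set \<Rightarrow> (complex \<Rightarrow> real^3) \<Rightarrow> (complex \<Rightarrow> real^3) \<Rightarrow> bool" where
  "unit_normal_on S f \<nu> = (smooth_on S \<nu> \<and> (\<forall>x\<in>S.
     norm (\<nu> x) = 1 \<and> \<nu> x \<bullet> pd 1 f x = 0 \<and> \<nu> x \<bullet> pd \<i> f x = 0))"

definition sff :: "(complex \<Rightarrow> real^3) \<Rightarrow> (complex \<Rightarrow> real^3) \<Rightarrow> nat \<Rightarrow> nat \<Rightarrow> complex \<Rightarrow> real" where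
  "sff f \<nu> i j x = pd (coord j) (pd (coord i) f) x \<bullet> \<nu> x"

definition meanH :: "(complex \<Rightarrow> real^3) \<Rightarrow> (complex \<Rightarrow> real^3) \<Rightarrow> complex \<Rightarrow> real" where
  "meanH f \<nu> x = (\<Sum>i\<in>{1,2}. \<Sum>j\<in>{1,2}. ginv f i j x * sff f \<nu> i j x)"

definition sff0 :: "(complex \<Rightarrow> real^3) \<Rightarrow> (complex \<Rightarrow> real^3) \<Rightarrow> nat \<Rightarrow> nat \<Rightarrow> complex \<Rightarrow> real" where
  "sff0 f \<nu> i j x = sff f \<nu> i j x - 1/2 * meanH f \<nu> x * gmet f i j x"

definition normA0sq :: "(complex \<Rightarrow> real^3) \<Rightarrow> (complex \<Rightarrow> real^3) \<Rightarrow> complex \<Rightarrow> real" where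
  "normA0sq f \<nu> x = (\<Sum>i\<in>{1,2}. \<Sum>j\<in>{1,2}. \<Sum>k\<in>{1,2}. \<Sum>l\<in>{1,2}.
      ginv f i k x * ginv f j l x * sff0 f \<nu> i j x * sff0 f \<nu> k l x)"

definition laplace_g :: "(complex \<Rightarrow> real^3) \<Rightarrow> (complex \<Rightarrow> real) \<Rightarrow> complex \<Rightarrow> real" where
  "laplace_g f w x = (1 / sqrt (gdet f x)) *
     (\<Sum>i\<in>{1,2}. \<Sum>j\<in>{1,2}.
        pd (coord i) (\<lambda>y. sqrt (gdet f y) * ginv f i j y * pd (coord j) w y) x)"

text \<open>Willmore immersion: an immersion satisfying the Euler-Lagrange equation
  Delta_g H + |A^0|_g^2 H = 0 (for every smooth unit normal field; the equation is
  invariant under nu -> -nu).\<close>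
definition willmore_on :: "complex set \<Rightarrow> (complex \<Rightarrow> real^3) \<Rightarrow> bool" where
  "willmore_on S f = (immersion_on S f \<and> (\<forall>\<nu>. unit_normal_on S f \<nu> \<longrightarrow>
     (\<forall>x\<in>S. laplace_g f (meanH f \<nu>) x + normA0sq f \<nu> x * meanH f \<nu> x = 0)))"

end

theory Submission
  imports Defs
begin

(* In conformal coordinates the metric is E = exp(2u) times the euclidean one, so
   H = (h11 + h22) / E and phi = (h11 - h22) / 2 - i h12.  Expanding the third derivatives
   of f in the orthogonal frame (f_1, f_2, nu) yields the Codazzi equations, which in
   complex form say dzbar phi = (E/2) dz H.  Since Delta_g = 4 E^-1 dzbar dz and
   |A0|^2 = 2 |phi|^2 / E^2, the Willmore equation becomes dzbar dz H = -(H / 2E) cnj(phi) phi.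
   Hence M = [[0, E/2], [-(H / 2E) cnj(phi), 0]] is a smooth solution.  The only analytic
   input beyond the chain rule is the symmetry of second derivatives, which follows from
   the mean value theorem. *)

section \<open>Smooth functions and directional derivatives\<close>

lemma pd_has_derivative: "F differentiable (at x) \<Longrightarrow> (F has_derivative (\<lambda>v. pd v F x)) (at x)"
  unfolding pd_def by (metis frechet_derivative_works eta_contract_eq)

lemma pd_eqI: "(F has_derivative D) (at x) \<Longrightarrow> pd v F x = D v"
  unfolding pd_def by (metis frechet_derivative_at)

lemma pd_cong:
  assumes "open S" "x \<in> S" "\<And>y. y \<in> S \<Longrightarrow> F y = G y"
  shows "pd v F x = pd v G x"
proof -
  have "(F has_derivative D) (at x) \<longleftrightarrow> (G has_derivative D) (at x)" for D
    using assms has_derivative_transform_within_open by (metis (no_types, lifting))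
  then show ?thesis unfolding pd_def frechet_derivative_def by simp
qed

lemma pd_const [simp]: "pd v (\<lambda>y. c) = (\<lambda>x. 0)"
  unfolding pd_def by (simp add: fun_eq_iff)

lemma Ck_cong: "open S \<Longrightarrow> (\<And>y. y \<in> S \<Longrightarrow> F y = G y) \<Longrightarrow> Ck k S F \<Longrightarrow> Ck k S G"
proof (induction k arbitrary: F G)
  case 0
  then show ?case using continuous_on_cong by (metis Ck.simps(1))
next
  case (Suc k)
  have "G differentiable (at y)" if "y \<in> S" for y
  proof -
    obtain D where "(F has_derivative D) (at y)"
      using Suc.prems \<open>y \<in> S\<close> by (auto simp: differentiable_on_eq_differentiable_at differentiable_def)
    then have "(G has_derivative D) (at y)"
      using has_derivative_transform_within_open Suc.prems(1,2) \<open>y \<in> S\<close> by blast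
    then show ?thesis by (auto simp: differentiable_def)
  qed
  moreover have "Ck k S (pd v G)" for v
    using Suc.IH[OF Suc.prems(1) pd_cong[OF Suc.prems(1) _ Suc.prems(2)]] Suc.prems(3) by auto
  ultimately show ?case using Suc.prems(1) by (simp add: differentiable_on_eq_differentiable_at)
qed

lemma Ck_SucI:
  assumes "open S" "\<And>y. y \<in> S \<Longrightarrow> (F has_derivative D y) (at y)" "\<And>v. Ck k S (\<lambda>y. D y v)"
  shows "Ck (Suc k) S F"
proof -
  have "Ck k S (pd v F)" for v
    by (rule Ck_cong[OF assms(1) _ assms(3)]) (simp add: pd_eqI[OF assms(2)])
  moreover have "F differentiable_on S"
    using assms(1,2) by (auto simp: differentiable_on_eq_differentiable_at differentiable_def)
  ultimately show ?thesis by simp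
qed

lemma Ck_Suc_imp_Ck: "Ck (Suc k) S F \<Longrightarrow> Ck k S F"
  by (induction k arbitrary: F) (auto simp: differentiable_imp_continuous_on)

lemma Ck_imp_has_derivative:
  "open S \<Longrightarrow> Ck (Suc k) S F \<Longrightarrow> y \<in> S \<Longrightarrow> (F has_derivative (\<lambda>v. pd v F y)) (at y)"
  by (simp add: differentiable_on_eq_differentiable_at pd_has_derivative)

lemma Ck_const: "open S \<Longrightarrow> Ck k S (\<lambda>x. c)"
  by (induction k arbitrary: c) (auto simp: differentiable_on_const)

lemma Ck_linear: "open S \<Longrightarrow> bounded_linear L \<Longrightarrow> Ck k S F \<Longrightarrow> Ck k S (\<lambda>x. L (F x))"
proof (induction k arbitrary: F)
  case 0
  then show ?case by (simp add: bounded_linear.continuous_on)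
next
  case (Suc k)
  show ?case
    by (rule Ck_SucI[OF Suc.prems(1) bounded_linear.has_derivative[OF Suc.prems(2)
          Ck_imp_has_derivative[OF Suc.prems(1,3)]]])
      (use Suc in auto)
qed

lemma Ck_add: "open S \<Longrightarrow> Ck k S F \<Longrightarrow> Ck k S G \<Longrightarrow> Ck k S (\<lambda>x. F x + G x)"
proof (induction k arbitrary: F G)
  case 0
  then show ?case by (simp add: continuous_on_add)
next
  case (Suc k)
  show ?case
    by (rule Ck_SucI[OF Suc.prems(1) has_derivative_add[OF
          Ck_imp_has_derivative[OF Suc.prems(1,2)] Ck_imp_has_derivative[OF Suc.prems(1,3)]]])
      (use Suc in auto)
qed

lemma Ck_bilinear:
  "open S \<Longrightarrow> bounded_bilinear b \<Longrightarrow> Ck k S F \<Longrightarrow> Ck k S G \<Longrightarrow> Ck k S (\<lambda>x. b (F x) (G x))"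
proof (induction k arbitrary: F G)
  case 0
  then show ?case by (simp add: bounded_bilinear.continuous_on)
next
  case (Suc k)
  have "Ck k S (\<lambda>y. b (F y) (pd v G y) + b (pd v F y) (G y))" for v
  proof -
    have "Ck k S F" "Ck k S G" using Suc.prems(3,4) Ck_Suc_imp_Ck by blast+
    then show ?thesis using Suc by (intro Ck_add Suc.IH) auto
  qed
  then show ?case
    by (intro Ck_SucI[OF Suc.prems(1) bounded_bilinear.FDERIV[OF Suc.prems(2)
          Ck_imp_has_derivative[OF Suc.prems(1,3)] Ck_imp_has_derivative[OF Suc.prems(1,4)]]])
qed

lemma smooth_on_pd [simp]: "smooth_on S F \<Longrightarrow> smooth_on S (pd v F)"
  unfolding smooth_on_def by (metis Ck.simps(2))

lemma smooth_on_imp_continuous_on: "smooth_on S F \<Longrightarrow> continuous_on S F"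
  unfolding smooth_on_def by (metis Ck.simps(1))

lemma smooth_on_imp_has_derivative:
  "open S \<Longrightarrow> x \<in> S \<Longrightarrow> smooth_on S F \<Longrightarrow> (F has_derivative (\<lambda>v. pd v F x)) (at x)"
  unfolding smooth_on_def using Ck_imp_has_derivative by blast

lemma smooth_on_cong:
  "open S \<Longrightarrow> (\<And>y. y \<in> S \<Longrightarrow> F y = G y) \<Longrightarrow> smooth_on S F \<Longrightarrow> smooth_on S G"
  unfolding smooth_on_def using Ck_cong by blast

lemma smooth_on_const [simp]: "open S \<Longrightarrow> smooth_on S (\<lambda>x. c)"
  unfolding smooth_on_def using Ck_const by blast

lemma smooth_on_linear: "open S \<Longrightarrow> bounded_linear L \<Longrightarrow> smooth_on S F \<Longrightarrow> smooth_on S (\<lambda>x. L (F x))"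
  unfolding smooth_on_def using Ck_linear by blast

lemma smooth_on_add [simp]:
  "open S \<Longrightarrow> smooth_on S F \<Longrightarrow> smooth_on S G \<Longrightarrow> smooth_on S (\<lambda>x. F x + G x)"
  unfolding smooth_on_def using Ck_add by blast

lemma smooth_on_bilinear:
  "open S \<Longrightarrow> bounded_bilinear b \<Longrightarrow> smooth_on S F \<Longrightarrow> smooth_on S G \<Longrightarrow>
    smooth_on S (\<lambda>x. b (F x) (G x))"
  unfolding smooth_on_def using Ck_bilinear by blast

lemma smooth_on_inverse:
  fixes F :: "complex \<Rightarrow> 'a::real_normed_div_algebra"
  assumes S: "open S" and F: "smooth_on S F" "\<And>x. x \<in> S \<Longrightarrow> F x \<noteq> 0"
  shows "smooth_on S (\<lambda>x. inverse (F x))"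
  unfolding smooth_on_def
proof
  fix k
  show "Ck k S (\<lambda>x. inverse (F x))"
  proof (induction k)
    case 0
    then show ?case using F by (simp add: continuous_on_inverse smooth_on_imp_continuous_on)
  next
    case (Suc k)
    have "Ck k S (pd v F)" for v
      using F(1) smooth_on_pd unfolding smooth_on_def by blast
    then have "Ck k S (\<lambda>y. - (inverse (F y) * pd v F y * inverse (F y)))" for v
      by (intro Ck_linear[OF S bounded_linear_minus[OF bounded_linear_ident]]
          Ck_bilinear[OF S bounded_bilinear_mult] Suc)
    then show ?case
      by (intro Ck_SucI[OF S Deriv.has_derivative_inverse[OF F(2) smooth_on_imp_has_derivative[OF S _ F(1)]]])
  qed
qed

lemma smooth_on_minus [simp]: "open S \<Longrightarrow> smooth_on S F \<Longrightarrow> smooth_on S (\<lambda>x. - F x)"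
  by (rule smooth_on_linear[OF _ bounded_linear_minus[OF bounded_linear_ident]])

lemma smooth_on_diff [simp]:
  "open S \<Longrightarrow> smooth_on S F \<Longrightarrow> smooth_on S G \<Longrightarrow> smooth_on S (\<lambda>x. F x - G x)"
  using smooth_on_add[of S F "\<lambda>x. - G x"] by simp

lemma smooth_on_mult [simp]:
  fixes F G :: "complex \<Rightarrow> 'a::real_normed_algebra"
  shows "open S \<Longrightarrow> smooth_on S F \<Longrightarrow> smooth_on S G \<Longrightarrow> smooth_on S (\<lambda>x. F x * G x)"
  by (rule smooth_on_bilinear[OF _ bounded_bilinear_mult])

lemma smooth_on_divide [simp]:
  fixes F G :: "complex \<Rightarrow> 'a::real_normed_field"
  shows "open S \<Longrightarrow> smooth_on S F \<Longrightarrow> smooth_on S G \<Longrightarrow> (\<And>x. x \<in> S \<Longrightarrow> G x \<noteq> 0) \<Longrightarrow>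
    smooth_on S (\<lambda>x. F x / G x)"
  by (simp add: divide_inverse smooth_on_inverse)

lemma smooth_on_inner [simp]:
  "open S \<Longrightarrow> smooth_on S F \<Longrightarrow> smooth_on S G \<Longrightarrow> smooth_on S (\<lambda>x. F x \<bullet> G x)"
  by (rule smooth_on_bilinear[OF _ bounded_bilinear_inner])

lemma smooth_on_of_real [simp]:
  "open S \<Longrightarrow> smooth_on S F \<Longrightarrow> smooth_on S (\<lambda>x. complex_of_real (F x))"
  by (rule smooth_on_linear[OF _ bounded_linear_of_real])

lemma smooth_on_cnj [simp]: "open S \<Longrightarrow> smooth_on S F \<Longrightarrow> smooth_on S (\<lambda>x. cnj (F x))"
  by (rule smooth_on_linear[OF _ bounded_linear_cnj])

lemma pd_linear:
  "open S \<Longrightarrow> x \<in> S \<Longrightarrow> smooth_on S F \<Longrightarrow> bounded_linear L \<Longrightarrow>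
    pd v (\<lambda>y. L (F y)) x = L (pd v F x)"
  by (rule pd_eqI[OF bounded_linear.has_derivative[OF _ smooth_on_imp_has_derivative]])

lemma pd_bilinear:
  "open S \<Longrightarrow> x \<in> S \<Longrightarrow> smooth_on S F \<Longrightarrow> smooth_on S G \<Longrightarrow> bounded_bilinear b \<Longrightarrow>
    pd v (\<lambda>y. b (F y) (G y)) x = b (F x) (pd v G x) + b (pd v F x) (G x)"
  by (rule pd_eqI[OF bounded_bilinear.FDERIV[OF _ smooth_on_imp_has_derivative smooth_on_imp_has_derivative]])

lemma pd_add [simp]:
  "open S \<Longrightarrow> x \<in> S \<Longrightarrow> smooth_on S F \<Longrightarrow> smooth_on S G \<Longrightarrow>
    pd v (\<lambda>y. F y + G y) x = pd v F x + pd v G x"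
  by (rule pd_eqI[OF has_derivative_add[OF smooth_on_imp_has_derivative smooth_on_imp_has_derivative]])

lemma pd_diff [simp]:
  "open S \<Longrightarrow> x \<in> S \<Longrightarrow> smooth_on S F \<Longrightarrow> smooth_on S G \<Longrightarrow>
    pd v (\<lambda>y. F y - G y) x = pd v F x - pd v G x"
  by (rule pd_eqI[OF has_derivative_diff[OF smooth_on_imp_has_derivative smooth_on_imp_has_derivative]])

lemma pd_mult [simp]:
  fixes F G :: "complex \<Rightarrow> 'a::real_normed_algebra"
  shows "open S \<Longrightarrow> x \<in> S \<Longrightarrow> smooth_on S F \<Longrightarrow> smooth_on S G \<Longrightarrow>
    pd v (\<lambda>y. F y * G y) x = F x * pd v G x + pd v F x * G x"
  by (rule pd_bilinear[OF _ _ _ _ bounded_bilinear_mult])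

lemma pd_inner [simp]:
  "open S \<Longrightarrow> x \<in> S \<Longrightarrow> smooth_on S F \<Longrightarrow> smooth_on S G \<Longrightarrow>
    pd v (\<lambda>y. F y \<bullet> G y) x = F x \<bullet> pd v G x + pd v F x \<bullet> G x"
  by (rule pd_bilinear[OF _ _ _ _ bounded_bilinear_inner])

lemma pd_of_real [simp]:
  "open S \<Longrightarrow> x \<in> S \<Longrightarrow> smooth_on S F \<Longrightarrow>
    pd v (\<lambda>y. complex_of_real (F y)) x = complex_of_real (pd v F x)"
  by (rule pd_linear[OF _ _ _ bounded_linear_of_real])

lemma pd_divide_const [simp]:
  fixes F :: "complex \<Rightarrow> 'a::real_normed_field"
  shows "open S \<Longrightarrow> x \<in> S \<Longrightarrow> smooth_on S F \<Longrightarrow> pd v (\<lambda>y. F y / c) x = pd v F x / c"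
  by (rule pd_linear[OF _ _ _ bounded_linear_divide])

lemma pd_inverse:
  fixes F :: "complex \<Rightarrow> 'a::real_normed_div_algebra"
  shows "open S \<Longrightarrow> x \<in> S \<Longrightarrow> smooth_on S F \<Longrightarrow> F x \<noteq> 0 \<Longrightarrow>
    pd v (\<lambda>y. inverse (F y)) x = - (inverse (F x) * pd v F x * inverse (F x))"
  by (rule pd_eqI[OF Deriv.has_derivative_inverse[OF _ smooth_on_imp_has_derivative]])

lemma pd_scaleR_direction:
  "F differentiable (at x) \<Longrightarrow> pd (c *\<^sub>R v) F x = c *\<^sub>R pd v F x"
  by (rule linear_cmul[OF bounded_linear.linear[OF has_derivative_bounded_linear[OF pd_has_derivative]]])

section \<open>Symmetry of second derivatives\<close>

lemma has_real_derivative_along_line: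
  fixes G :: "complex \<Rightarrow> real"
  assumes "G differentiable (at (p + t *\<^sub>R w))"
  shows "((\<lambda>s. G (p + s *\<^sub>R w)) has_real_derivative pd w G (p + t *\<^sub>R w)) (at t)"
proof -
  have "((\<lambda>s. p + s *\<^sub>R w) has_derivative (\<lambda>s. s *\<^sub>R w)) (at t)"
    by (auto intro!: derivative_eq_intros)
  from diff_chain_at[OF this pd_has_derivative[OF assms]]
  have "((G \<circ> (\<lambda>s. p + s *\<^sub>R w)) has_derivative (\<lambda>s. s *\<^sub>R pd w G (p + t *\<^sub>R w))) (at t)"
    by (simp only: o_def pd_scaleR_direction[OF assms])
  then show ?thesis
    unfolding has_field_derivative_def o_def by (rule has_derivative_eq_rhs) (simp add: fun_eq_iff)
qed

lemma second_difference_mean_value: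
  fixes g :: "complex \<Rightarrow> real"
  assumes S: "open S" "smooth_on S g" and h: "h > 0"
    and inS: "\<And>s t. 0 \<le> s \<Longrightarrow> s \<le> h \<Longrightarrow> 0 \<le> t \<Longrightarrow> t \<le> h \<Longrightarrow> x + s *\<^sub>R u + t *\<^sub>R v \<in> S"
  obtains a b where "0 < a" "a < h" "0 < b" "b < h"
    "g (x + h *\<^sub>R u + h *\<^sub>R v) - g (x + h *\<^sub>R u) - g (x + h *\<^sub>R v) + g x
      = h * h * pd v (pd u g) (x + a *\<^sub>R u + b *\<^sub>R v)"
proof -
  have diff: "G differentiable (at y)" if "smooth_on S G" "y \<in> S" for G and y :: complex
    using smooth_on_imp_has_derivative[OF S(1) that(2,1)] by (auto simp: differentiable_def)
  define \<phi> where "\<phi> s = g ((x + h *\<^sub>R v) + s *\<^sub>R u) - g (x + s *\<^sub>R u)" for s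
  have "(\<phi> has_real_derivative (pd u g ((x + h *\<^sub>R v) + s *\<^sub>R u) - pd u g (x + s *\<^sub>R u))) (at s)"
    if "0 \<le> s" "s \<le> h" for s
  proof -
    have "(x + h *\<^sub>R v) + s *\<^sub>R u \<in> S" "x + s *\<^sub>R u \<in> S"
      using inS[of s h] inS[of s 0] that h by (simp_all add: add_ac)
    then show ?thesis
      unfolding \<phi>_def by (intro DERIV_diff has_real_derivative_along_line diff[OF S(2)])
  qed
  from MVT2[OF h this] obtain a where a: "0 < a" "a < h"
    "\<phi> h - \<phi> 0 = h * (pd u g ((x + h *\<^sub>R v) + a *\<^sub>R u) - pd u g (x + a *\<^sub>R u))" by auto
  define \<psi> where "\<psi> t = pd u g ((x + a *\<^sub>R u) + t *\<^sub>R v)" for t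
  have "(\<psi> has_real_derivative pd v (pd u g) ((x + a *\<^sub>R u) + t *\<^sub>R v)) (at t)"
    if "0 \<le> t" "t \<le> h" for t
    unfolding \<psi>_def using inS[of a t] that a
    by (intro has_real_derivative_along_line diff) (simp_all add: S(2))
  from MVT2[OF h this] obtain b where b: "0 < b" "b < h"
    "\<psi> h - \<psi> 0 = h * pd v (pd u g) ((x + a *\<^sub>R u) + b *\<^sub>R v)" by auto
  have "g (x + h *\<^sub>R u + h *\<^sub>R v) - g (x + h *\<^sub>R u) - g (x + h *\<^sub>R v) + g x = \<phi> h - \<phi> 0"
    unfolding \<phi>_def by (simp add: add_ac)
  also have "\<dots> = h * (\<psi> h - \<psi> 0)"
    using a(3) unfolding \<psi>_def by (simp add: add_ac)
  also have "\<dots> = h * h * pd v (pd u g) (x + a *\<^sub>R u + b *\<^sub>R v)"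
    using b(3) by simp
  finally show ?thesis using a b that by blast
qed

lemma mixed_partials_meet:
  fixes g :: "complex \<Rightarrow> real"
  assumes S: "open S" "smooth_on S g" and h: "h > 0"
    and inS: "\<And>s t. 0 \<le> s \<Longrightarrow> s \<le> h \<Longrightarrow> 0 \<le> t \<Longrightarrow> t \<le> h \<Longrightarrow> x + s *\<^sub>R u + t *\<^sub>R v \<in> S"
      "\<And>s t. 0 \<le> s \<Longrightarrow> s \<le> h \<Longrightarrow> 0 \<le> t \<Longrightarrow> t \<le> h \<Longrightarrow> x + s *\<^sub>R v + t *\<^sub>R u \<in> S"
  obtains a1 b1 a2 b2 where "0 < a1" "a1 < h" "0 < b1" "b1 < h" "0 < a2" "a2 < h" "0 < b2" "b2 < h"
    "pd v (pd u g) (x + a1 *\<^sub>R u + b1 *\<^sub>R v) = pd u (pd v g) (x + a2 *\<^sub>R v + b2 *\<^sub>R u)"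
proof -
  obtain a1 b1 where 1: "0 < a1" "a1 < h" "0 < b1" "b1 < h"
    "g (x + h *\<^sub>R u + h *\<^sub>R v) - g (x + h *\<^sub>R u) - g (x + h *\<^sub>R v) + g x
      = h * h * pd v (pd u g) (x + a1 *\<^sub>R u + b1 *\<^sub>R v)"
    using second_difference_mean_value[OF S h inS(1)] by blast
  obtain a2 b2 where 2: "0 < a2" "a2 < h" "0 < b2" "b2 < h"
    "g (x + h *\<^sub>R v + h *\<^sub>R u) - g (x + h *\<^sub>R v) - g (x + h *\<^sub>R u) + g x
      = h * h * pd u (pd v g) (x + a2 *\<^sub>R v + b2 *\<^sub>R u)"
    using second_difference_mean_value[OF S h inS(2)] by blast
  have swap: "x + h *\<^sub>R v + h *\<^sub>R u = x + h *\<^sub>R u + h *\<^sub>R v"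
    by (simp only: add_ac)
  have "h * h * pd v (pd u g) (x + a1 *\<^sub>R u + b1 *\<^sub>R v) = h * h * pd u (pd v g) (x + a2 *\<^sub>R v + b2 *\<^sub>R u)"
    using 1(5) 2(5) unfolding swap by linarith
  then show ?thesis
    using that 1(1-4) 2(1-4) h by simp
qed

lemma mixed_partials_nearby:
  fixes g :: "complex \<Rightarrow> real"
  assumes S: "open S" "smooth_on S g" "x \<in> S" and "\<delta> > 0"
  obtains p q where "dist p x < \<delta>" "dist q x < \<delta>" "pd v (pd u g) p = pd u (pd v g) q"
proof -
  obtain r where r: "r > 0" "ball x r \<subseteq> S" using S openE by blast
  define m where "m = min r \<delta>"
  define K where "K = norm u + norm v + 1"
  define h where "h = m / (2 * K)"
  have m: "m > 0" "m \<le> r" "m \<le> \<delta>" using r \<open>\<delta> > 0\<close> by (auto simp: m_def)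
  have K: "K > 0" unfolding K_def using norm_ge_zero[of u] norm_ge_zero[of v] by linarith
  have h: "h > 0" unfolding h_def using m K by simp
  have small: "dist (x + s *\<^sub>R a + t *\<^sub>R b) x < m"
    if "0 \<le> s" "s \<le> h" "0 \<le> t" "t \<le> h" "norm a + norm b = norm u + norm v" for s t a b
  proof -
    have "norm (s *\<^sub>R a + t *\<^sub>R b) \<le> s * norm a + t * norm b"
      using norm_triangle_ineq[of "s *\<^sub>R a" "t *\<^sub>R b"] that by simp
    also have "\<dots> \<le> h * norm a + h * norm b"
      using that by (intro add_mono mult_right_mono) auto
    also have "\<dots> = h * (norm u + norm v)"
      using that(5) by (simp add: distrib_left[symmetric])
    also have "\<dots> < h * K"
      using h by (simp add: K_def)
    also have "\<dots> = m / 2"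
      using K by (simp add: h_def)
    finally show ?thesis
      using m by (simp add: dist_norm add.assoc)
  qed
  have inS: "x + s *\<^sub>R a + t *\<^sub>R b \<in> S"
    if "0 \<le> s" "s \<le> h" "0 \<le> t" "t \<le> h" "norm a + norm b = norm u + norm v" for s t a b
  proof -
    have "x + s *\<^sub>R a + t *\<^sub>R b \<in> ball x r"
      using small[OF that] m(2) by (simp add: dist_commute)
    then show ?thesis using r(2) by blast
  qed
  obtain a1 b1 a2 b2 where ab: "0 < a1" "a1 < h" "0 < b1" "b1 < h" "0 < a2" "a2 < h" "0 < b2" "b2 < h"
    "pd v (pd u g) (x + a1 *\<^sub>R u + b1 *\<^sub>R v) = pd u (pd v g) (x + a2 *\<^sub>R v + b2 *\<^sub>R u)"
    using mixed_partials_meet[OF S(1,2) h inS inS[of _ _ v u, OF _ _ _ _ add.commute]] by blast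
  show ?thesis
  proof (rule that)
    show "dist (x + a1 *\<^sub>R u + b1 *\<^sub>R v) x < \<delta>"
      using small[of a1 b1 u v] ab(1-4) m(3) by simp
    show "dist (x + a2 *\<^sub>R v + b2 *\<^sub>R u) x < \<delta>"
      using small[of a2 b2 v u, OF _ _ _ _ add.commute] ab(5-8) m(3) by simp
  qed (rule ab(9))
qed

lemma pd_commute_real:
  fixes g :: "complex \<Rightarrow> real"
  assumes S: "open S" "x \<in> S" "smooth_on S g"
  shows "pd v (pd u g) x = pd u (pd v g) x"
proof (rule ccontr)
  let ?A = "pd v (pd u g)" and ?B = "pd u (pd v g)"
  define e where "e = \<bar>?A x - ?B x\<bar> / 2"
  assume "?A x \<noteq> ?B x"
  then have e: "e > 0" by (simp add: e_def)
  have "isCont F x" if "smooth_on S F" for F :: "complex \<Rightarrow> real"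
    using smooth_on_imp_continuous_on[OF that] continuous_on_eq_continuous_at[OF S(1)] S(2) by blast
  then have "isCont ?A x" "isCont ?B x" using S(3) by simp_all
  then obtain d1 d2 where d: "d1 > 0" "d2 > 0"
    "\<forall>y. dist y x < d1 \<longrightarrow> dist (?A y) (?A x) < e"
    "\<forall>y. dist y x < d2 \<longrightarrow> dist (?B y) (?B x) < e"
    using e unfolding continuous_at_eps_delta by blast
  obtain p q where pq: "dist p x < min d1 d2" "dist q x < min d1 d2" "?A p = ?B q"
    using mixed_partials_nearby[OF S(1,3,2), where \<delta>="min d1 d2" and u=u and v=v] d(1,2) by auto
  have "dist (?A p) (?A x) < e" "dist (?B q) (?B x) < e"
    using pq(1,2) d(3,4) by simp_all
  moreover have "?A x - ?B x = (?B q - ?B x) - (?A p - ?A x)"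
    using pq(3) by simp
  then have "\<bar>?A x - ?B x\<bar> \<le> \<bar>?B q - ?B x\<bar> + \<bar>?A p - ?A x\<bar>"
    by (metis abs_triangle_ineq4)
  moreover have "\<And>X Y Z :: real. Z < X / 2 \<Longrightarrow> Y < X / 2 \<Longrightarrow> X \<le> Y + Z \<Longrightarrow> False"
    by linarith
  ultimately show False unfolding e_def dist_real_def by blast
qed

lemma pd_commute:
  fixes G :: "complex \<Rightarrow> 'b::euclidean_space"
  assumes S: "open S" "x \<in> S" "smooth_on S G"
  shows "pd v (pd u G) x = pd u (pd v G) x"
proof (rule euclidean_eqI)
  fix b :: 'b
  have lin: "pd w (\<lambda>y. F y \<bullet> b) y = pd w F y \<bullet> b" if "smooth_on S F" "y \<in> S" for w F y
    by (rule pd_linear[OF S(1) that(2,1) bounded_linear_inner_left])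
  have "pd v (pd u G) x \<bullet> b = pd v (pd u (\<lambda>y. G y \<bullet> b)) x"
    using S by (simp add: lin pd_cong[OF S(1) _ lin])
  also have "\<dots> = pd u (pd v (\<lambda>y. G y \<bullet> b)) x"
    using S smooth_on_linear[OF S(1) bounded_linear_inner_left S(3)] by (intro pd_commute_real)
  also have "\<dots> = pd u (pd v G) x \<bullet> b"
    using S by (simp add: lin pd_cong[OF S(1) _ lin])
  finally show "pd v (pd u G) x \<bullet> b = pd u (pd v G) x \<bullet> b" .
qed

section \<open>Wirtinger derivatives and orthogonal frames\<close>

lemma pd_eq_0_if_constant_on:
  "open S \<Longrightarrow> x \<in> S \<Longrightarrow> (\<And>y. y \<in> S \<Longrightarrow> F y = c) \<Longrightarrow> pd v F x = 0"
  using pd_cong[of S x F "\<lambda>_. c" v] by simp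

lemma pd_inner_eq_0_if_constant_on:
  assumes "open S" "z \<in> S" "smooth_on S F" "smooth_on S G" "\<And>y. y \<in> S \<Longrightarrow> F y \<bullet> G y = c"
  shows "F z \<bullet> pd v G z + pd v F z \<bullet> G z = 0"
  using pd_inner[OF assms(1-4), of v] pd_eq_0_if_constant_on[OF assms(1,2,5)] by simp

lemma dzbar_dz_of_real:
  fixes F :: "complex \<Rightarrow> real"
  assumes S: "open S" "z \<in> S" "smooth_on S F"
  shows "dzbar (dz (\<lambda>y. complex_of_real (F y))) z
    = complex_of_real ((pd 1 (pd 1 F) z + pd \<i> (pd \<i> F) z) / 4)"
proof -
  have dz: "dz (\<lambda>y. complex_of_real (F y)) y
      = (complex_of_real (pd 1 F y) - \<i> * complex_of_real (pd \<i> F y)) / 2" if "y \<in> S" for y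
    unfolding dz_def using S that by simp
  have pd_dz: "pd v (dz (\<lambda>y. complex_of_real (F y))) z
      = (complex_of_real (pd v (pd 1 F) z) - \<i> * complex_of_real (pd v (pd \<i> F) z)) / 2" for v
    using S by (simp add: pd_cong[OF S(1,2) dz])
  show ?thesis
    unfolding dzbar_def pd_dz using pd_commute_real[OF S, of \<i> 1]
    by (simp add: complex_eq_iff field_simps)
qed

lemma orthogonal_frame_decomposition:
  fixes e1 e2 e3 a :: "'a::euclidean_space"
  assumes dim: "DIM('a) = 3"
    and orth: "e1 \<bullet> e2 = 0" "e1 \<bullet> e3 = 0" "e2 \<bullet> e3 = 0"
    and nz: "e1 \<noteq> 0" "e2 \<noteq> 0" "e3 \<noteq> 0"
  shows "a = (a \<bullet> e1 / (e1 \<bullet> e1)) *\<^sub>R e1 + (a \<bullet> e2 / (e2 \<bullet> e2)) *\<^sub>R e2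
    + (a \<bullet> e3 / (e3 \<bullet> e3)) *\<^sub>R e3"
proof -
  define r where "r = a - ((a \<bullet> e1 / (e1 \<bullet> e1)) *\<^sub>R e1 + (a \<bullet> e2 / (e2 \<bullet> e2)) *\<^sub>R e2
    + (a \<bullet> e3 / (e3 \<bullet> e3)) *\<^sub>R e3)"
  have orth': "e2 \<bullet> e1 = 0" "e3 \<bullet> e1 = 0" "e3 \<bullet> e2 = 0" using orth by (simp_all add: inner_commute)
  have r: "r \<bullet> e1 = 0" "r \<bullet> e2 = 0" "r \<bullet> e3 = 0"
    unfolding r_def using nz orth orth' by (simp_all add: inner_diff_left inner_add_left)
  have "r = 0"
  proof (rule ccontr)
    assume "r \<noteq> 0"
    let ?B = "{e1, e2, e3, r}"
    have "pairwise orthogonal ?B"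
      unfolding pairwise_def orthogonal_def using orth orth' r by (auto simp: inner_commute)
    moreover have "0 \<notin> ?B" using nz \<open>r \<noteq> 0\<close> by auto
    ultimately have "independent ?B"
      by (rule pairwise_orthogonal_independent)
    then have "card ?B \<le> 3"
      using independent_bound dim by metis
    moreover have "e1 \<noteq> e2" "e1 \<noteq> e3" "e2 \<noteq> e3" "e1 \<noteq> r" "e2 \<noteq> r" "e3 \<noteq> r"
      using orth r nz by auto
    ultimately show False by simp
  qed
  then show ?thesis
    unfolding r_def by simp
qed

lemma inner_orthogonal_frame_expansion:
  fixes e1 e2 e3 a b :: "'a::euclidean_space"
  assumes "DIM('a) = 3" "e1 \<bullet> e2 = 0" "e1 \<bullet> e3 = 0" "e2 \<bullet> e3 = 0" "e1 \<noteq> 0" "e2 \<noteq> 0" "e3 \<noteq> 0"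
  shows "a \<bullet> b = (a \<bullet> e1) * (b \<bullet> e1) / (e1 \<bullet> e1) + (a \<bullet> e2) * (b \<bullet> e2) / (e2 \<bullet> e2)
    + (a \<bullet> e3) * (b \<bullet> e3) / (e3 \<bullet> e3)"
proof -
  have "a \<bullet> b = ((a \<bullet> e1 / (e1 \<bullet> e1)) *\<^sub>R e1 + (a \<bullet> e2 / (e2 \<bullet> e2)) *\<^sub>R e2
      + (a \<bullet> e3 / (e3 \<bullet> e3)) *\<^sub>R e3) \<bullet> b"
    using orthogonal_frame_decomposition[OF assms] by (rule arg_cong)
  then show ?thesis by (simp add: inner_add_left inner_commute[of b])
qed

section \<open>Conformal charts\<close>

locale conformal_chart =
  fixes S :: "complex set" and f \<nu> :: "complex \<Rightarrow> real^3" and u :: "complex \<Rightarrow> real"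
  assumes open_S: "open S"
    and smooth_f: "smooth_on S f"
    and conformal: "conformal_with S f u"
    and normal: "unit_normal_on S f \<nu>"
begin

abbreviation f1 where "f1 \<equiv> pd 1 f"
abbreviation f2 where "f2 \<equiv> pd \<i> f"
abbreviation h where "h \<equiv> sff f \<nu>"
abbreviation H where "H \<equiv> meanH f \<nu>"

definition E :: "complex \<Rightarrow> real" where
  "E y = f1 y \<bullet> f1 y"

text \<open>The function \<open>\<phi>\<close> of the statement; it is twice the Hopf coefficient \<open>\<langle>f\<^sub>z\<^sub>z, \<nu>\<rangle>\<close>.\<close>

definition hopf :: "complex \<Rightarrow> complex" where
  "hopf y = complex_of_real (sff0 f \<nu> 1 1 y) - \<i> * complex_of_real (sff0 f \<nu> 1 2 y)"

lemma E_eq_exp: "y \<in> S \<Longrightarrow> E y = exp (2 * u y)"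
  using conformal unfolding conformal_with_def E_def by auto

lemma E_pos: "y \<in> S \<Longrightarrow> E y > 0"
  by (simp add: E_eq_exp)

lemma E_nonzero: "y \<in> S \<Longrightarrow> E y \<noteq> 0"
  using E_pos by fastforce

lemma tangent_frame:
  assumes "y \<in> S"
  shows "f2 y \<bullet> f2 y = E y" "f1 y \<bullet> f2 y = 0"
  using conformal assms unfolding conformal_with_def E_def by auto

lemma normal_frame:
  assumes "y \<in> S"
  shows "\<nu> y \<bullet> \<nu> y = 1" "\<nu> y \<bullet> f1 y = 0" "\<nu> y \<bullet> f2 y = 0"
  using normal assms unfolding unit_normal_on_def by (auto simp: norm_eq_1)

lemma smooth_nu: "smooth_on S \<nu>"
  using normal unfolding unit_normal_on_def by blast

lemma smooth_E: "smooth_on S E"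
  unfolding E_def[abs_def] using open_S smooth_f by simp

lemma smooth_sff: "smooth_on S (h i j)"
  unfolding sff_def[abs_def] using open_S smooth_f smooth_nu by simp

lemma pd_f1_eq_pd_f2: "y \<in> S \<Longrightarrow> pd \<i> f1 y = pd 1 f2 y"
  using pd_commute[OF open_S _ smooth_f] by blast

lemma sff_symmetric: "y \<in> S \<Longrightarrow> h 2 1 y = h 1 2 y"
  by (simp add: sff_def coord_def pd_f1_eq_pd_f2)

lemma gmet_conformal:
  "y \<in> S \<Longrightarrow> i \<in> {1, 2} \<Longrightarrow> j \<in> {1, 2} \<Longrightarrow> gmet f i j y = (if i = j then E y else 0)"
  using tangent_frame[of y] by (auto simp: gmet_def coord_def E_def inner_commute)

lemma gdet_conformal: "y \<in> S \<Longrightarrow> gdet f y = E y ^ 2"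
  by (simp add: gdet_def gmet_conformal power2_eq_square)

lemma ginv_conformal:
  "y \<in> S \<Longrightarrow> i \<in> {1, 2} \<Longrightarrow> j \<in> {1, 2} \<Longrightarrow> ginv f i j y = (if i = j then 1 / E y else 0)"
  using E_pos[of y] by (auto simp: ginv_def gdet_conformal gmet_conformal power2_eq_square)

lemma meanH_conformal: "y \<in> S \<Longrightarrow> H y = (h 1 1 y + h 2 2 y) / E y"
  by (simp add: meanH_def ginv_conformal add_divide_distrib)

text \<open>The simplifier rewrites the index \<open>1 :: nat\<close> to \<open>Suc 0\<close>, after which rules about
  \<open>sff0 f \<nu> 1 1\<close> no longer match; hence \<open>del: One_nat_def\<close> below.\<close>

lemma sff0_conformal:
  assumes "y \<in> S"
  shows "sff0 f \<nu> 1 1 y = (h 1 1 y - h 2 2 y) / 2" "sff0 f \<nu> 2 2 y = - (h 1 1 y - h 2 2 y) / 2"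
    "sff0 f \<nu> 1 2 y = h 1 2 y" "sff0 f \<nu> 2 1 y = h 1 2 y"
  using assms E_pos[OF assms]
  by (simp_all add: sff0_def meanH_conformal gmet_conformal sff_symmetric field_simps del: One_nat_def)

lemma cmod_hopf_squared: "(cmod (hopf y))\<^sup>2 = (sff0 f \<nu> 1 1 y)\<^sup>2 + (sff0 f \<nu> 1 2 y)\<^sup>2"
  by (simp add: cmod_power2 hopf_def del: One_nat_def)

lemma normA0sq_conformal: "y \<in> S \<Longrightarrow> normA0sq f \<nu> y = 2 * (cmod (hopf y))\<^sup>2 / (E y)\<^sup>2"
  unfolding cmod_hopf_squared using E_pos[of y]
  by (simp add: normA0sq_def ginv_conformal sff0_conformal power2_eq_square field_simps del: One_nat_def)

lemma laplace_g_conformal: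
  assumes y: "y \<in> S"
  shows "laplace_g f w y = (pd 1 (pd 1 w) y + pd \<i> (pd \<i> w) y) / E y"
proof -
  have "pd (coord i) (\<lambda>x. sqrt (gdet f x) * ginv f i j x * pd (coord j) w x) y
      = (if i = j then pd (coord i) (pd (coord j) w) y else 0)" if "i \<in> {1, 2}" "j \<in> {1, 2}" for i j
  proof (rule trans[OF pd_cong[OF open_S y]])
    fix x assume "x \<in> S"
    then show "sqrt (gdet f x) * ginv f i j x * pd (coord j) w x
        = (if i = j then pd (coord j) w x else 0)"
      using that E_pos[of x] by (simp add: gdet_conformal ginv_conformal)
  qed (auto simp: fun_eq_iff)
  then show ?thesis
    using y E_pos[OF y] by (simp add: laplace_g_def gdet_conformal coord_def add_divide_distrib)
qed

lemma frame_expansion: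
  assumes z: "z \<in> S"
  shows "a \<bullet> b = (a \<bullet> f1 z) * (b \<bullet> f1 z) / E z + (a \<bullet> f2 z) * (b \<bullet> f2 z) / E z
    + (a \<bullet> \<nu> z) * (b \<bullet> \<nu> z)"
proof -
  have "f1 z \<noteq> 0" "f2 z \<noteq> 0" "\<nu> z \<noteq> 0"
    using E_pos[OF z] tangent_frame[OF z] normal_frame[OF z] unfolding E_def by auto
  then show ?thesis
    using inner_orthogonal_frame_expansion[of "f1 z" "f2 z" "\<nu> z" a b]
      tangent_frame[OF z] normal_frame[OF z]
    by (simp add: E_def inner_commute)
qed

lemma pd_E:
  assumes z: "z \<in> S"
  shows "pd v E z = 2 * (pd v f1 z \<bullet> f1 z)" "pd v E z = 2 * (pd v f2 z \<bullet> f2 z)"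
proof -
  show "pd v E z = 2 * (pd v f1 z \<bullet> f1 z)"
    unfolding E_def[abs_def] using open_S z smooth_f by (simp add: inner_commute)
  have "pd v E z = pd v (\<lambda>y. f2 y \<bullet> f2 y) z"
    by (rule pd_cong[OF open_S z]) (simp add: tangent_frame)
  then show "pd v E z = 2 * (pd v f2 z \<bullet> f2 z)"
    using open_S z smooth_f by (simp add: inner_commute)
qed

lemma christoffel:
  assumes z: "z \<in> S"
  shows "pd 1 f1 z \<bullet> f1 z = pd 1 E z / 2" "pd \<i> f1 z \<bullet> f1 z = pd \<i> E z / 2"
    "pd \<i> f1 z \<bullet> f2 z = pd 1 E z / 2" "pd \<i> f2 z \<bullet> f2 z = pd \<i> E z / 2"
    "pd 1 f1 z \<bullet> f2 z = - pd \<i> E z / 2" "pd \<i> f2 z \<bullet> f1 z = - pd 1 E z / 2"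
proof -
  have tangent_E: "pd v f1 z \<bullet> f1 z = pd v E z / 2" "pd v f2 z \<bullet> f2 z = pd v E z / 2" for v
    using pd_E[OF z, of v] by simp_all
  have orth: "f1 z \<bullet> pd v f2 z + pd v f1 z \<bullet> f2 z = 0" for v
    by (rule pd_inner_eq_0_if_constant_on[OF open_S z]) (simp_all add: smooth_f tangent_frame)
  have sym: "pd \<i> f1 z = pd 1 f2 z"
    by (rule pd_f1_eq_pd_f2[OF z])
  show "pd 1 f1 z \<bullet> f1 z = pd 1 E z / 2" "pd \<i> f1 z \<bullet> f1 z = pd \<i> E z / 2"
    "pd \<i> f2 z \<bullet> f2 z = pd \<i> E z / 2"
    by (rule tangent_E)+
  show "pd \<i> f1 z \<bullet> f2 z = pd 1 E z / 2"
    unfolding sym by (rule tangent_E)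
  show "pd 1 f1 z \<bullet> f2 z = - pd \<i> E z / 2"
    using orth[of 1] tangent_E(1)[of \<i>] inner_commute[of "f1 z" "pd \<i> f1 z"]
    unfolding sym[symmetric] by linarith
  show "pd \<i> f2 z \<bullet> f1 z = - pd 1 E z / 2"
    using orth[of \<i>] tangent_E(2)[of 1] inner_commute[of "f1 z" "pd \<i> f2 z"]
    unfolding sym by linarith
qed

lemma sff_coords:
  "h 1 1 = (\<lambda>y. pd 1 f1 y \<bullet> \<nu> y)" "h 1 2 = (\<lambda>y. pd \<i> f1 y \<bullet> \<nu> y)"
  "h 2 2 = (\<lambda>y. pd \<i> f2 y \<bullet> \<nu> y)"
  by (simp_all add: sff_def[abs_def] coord_def)

lemma weingarten:
  assumes z: "z \<in> S"
  shows "pd v \<nu> z \<bullet> \<nu> z = 0"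
    "pd 1 \<nu> z \<bullet> f1 z = - h 1 1 z" "pd \<i> \<nu> z \<bullet> f1 z = - h 1 2 z"
    "pd 1 \<nu> z \<bullet> f2 z = - h 1 2 z" "pd \<i> \<nu> z \<bullet> f2 z = - h 2 2 z"
proof -
  have tangent: "\<nu> z \<bullet> pd v f1 z + pd v \<nu> z \<bullet> f1 z = 0" "\<nu> z \<bullet> pd v f2 z + pd v \<nu> z \<bullet> f2 z = 0"
    for v
    by (rule pd_inner_eq_0_if_constant_on[OF open_S z]; simp add: smooth_f smooth_nu normal_frame)+
  have h: "h 1 1 z = \<nu> z \<bullet> pd 1 f1 z" "h 1 2 z = \<nu> z \<bullet> pd \<i> f1 z" "h 2 2 z = \<nu> z \<bullet> pd \<i> f2 z"
    unfolding sff_coords by (simp_all add: inner_commute)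
  show "pd v \<nu> z \<bullet> \<nu> z = 0"
    using pd_inner_eq_0_if_constant_on[OF open_S z smooth_nu smooth_nu, of 1 v] normal_frame
    by (simp add: inner_commute)
  show "pd 1 \<nu> z \<bullet> f1 z = - h 1 1 z" "pd \<i> \<nu> z \<bullet> f1 z = - h 1 2 z"
    "pd \<i> \<nu> z \<bullet> f2 z = - h 2 2 z"
    unfolding h using tangent by (simp_all add: eq_neg_iff_add_eq_0 add.commute)
  show "pd 1 \<nu> z \<bullet> f2 z = - h 1 2 z"
    unfolding h pd_f1_eq_pd_f2[OF z] using tangent by (simp add: eq_neg_iff_add_eq_0 add.commute)
qed

lemma pd_sff:
  assumes z: "z \<in> S"
  shows "pd v (h 1 1) z = pd 1 f1 z \<bullet> pd v \<nu> z + pd v (pd 1 f1) z \<bullet> \<nu> z"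
    "pd v (h 1 2) z = pd \<i> f1 z \<bullet> pd v \<nu> z + pd v (pd \<i> f1) z \<bullet> \<nu> z"
    "pd v (h 2 2) z = pd \<i> f2 z \<bullet> pd v \<nu> z + pd v (pd \<i> f2) z \<bullet> \<nu> z"
  unfolding sff_coords using open_S z smooth_f smooth_nu by simp_all

lemma codazzi_1:
  assumes z: "z \<in> S"
  shows "pd \<i> (h 1 1) z - pd 1 (h 1 2) z = (h 1 1 z + h 2 2 z) * pd \<i> E z / (2 * E z)"
proof -
  have "pd 1 f1 z \<bullet> pd \<i> \<nu> z = pd 1 E z / 2 * - h 1 2 z / E z + - pd \<i> E z / 2 * - h 2 2 z / E z"
    using frame_expansion[OF z, of "pd 1 f1 z" "pd \<i> \<nu> z"] christoffel[OF z] weingarten[OF z]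
    by simp
  moreover have "pd \<i> f1 z \<bullet> pd 1 \<nu> z = pd \<i> E z / 2 * - h 1 1 z / E z + pd 1 E z / 2 * - h 1 2 z / E z"
    using frame_expansion[OF z, of "pd \<i> f1 z" "pd 1 \<nu> z"] christoffel[OF z] weingarten[OF z]
    by simp
  moreover have "pd \<i> (pd 1 f1) z = pd 1 (pd \<i> f1) z"
    using pd_commute[OF open_S z smooth_on_pd[OF smooth_f]] .
  ultimately show ?thesis
    using pd_sff[OF z] E_pos[OF z] by (simp add: field_simps)
qed

lemma codazzi_2:
  assumes z: "z \<in> S"
  shows "pd 1 (h 2 2) z - pd \<i> (h 1 2) z = (h 1 1 z + h 2 2 z) * pd 1 E z / (2 * E z)"
proof -
  have "pd \<i> f2 z \<bullet> pd 1 \<nu> z = - pd 1 E z / 2 * - h 1 1 z / E z + pd \<i> E z / 2 * - h 1 2 z / E z"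
    using frame_expansion[OF z, of "pd \<i> f2 z" "pd 1 \<nu> z"] christoffel[OF z] weingarten[OF z]
    by simp
  moreover have "pd \<i> f1 z \<bullet> pd \<i> \<nu> z = pd \<i> E z / 2 * - h 1 2 z / E z + pd 1 E z / 2 * - h 2 2 z / E z"
    using frame_expansion[OF z, of "pd \<i> f1 z" "pd \<i> \<nu> z"] christoffel[OF z] weingarten[OF z]
    by simp
  moreover have "pd 1 (pd \<i> f2) z = pd \<i> (pd 1 f2) z"
    using pd_commute[OF open_S z smooth_on_pd[OF smooth_f]] .
  moreover have "pd \<i> (pd \<i> f1) z = pd \<i> (pd 1 f2) z"
    using pd_cong[OF open_S z] pd_f1_eq_pd_f2 by blast
  ultimately show ?thesis
    using pd_sff[OF z] E_pos[OF z] by (simp add: field_simps)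
qed

section \<open>The Wirtinger system for \<open>\<phi>\<close> and \<open>\<partial>\<^sub>zH\<close>\<close>

lemma smooth_meanH: "smooth_on S H"
proof (rule smooth_on_cong[OF open_S])
  show "smooth_on S (\<lambda>y. (h 1 1 y + h 2 2 y) / E y)"
    using E_nonzero
    by (intro smooth_on_divide smooth_on_add open_S smooth_sff smooth_E) auto
  show "(h 1 1 y + h 2 2 y) / E y = H y" if "y \<in> S" for y
    using meanH_conformal[OF that] by simp
qed

lemma pd_meanH:
  assumes z: "z \<in> S"
  shows "pd v H z = (pd v (h 1 1) z + pd v (h 2 2) z) / E z - (h 1 1 z + h 2 2 z) * pd v E z / (E z)\<^sup>2"
proof -
  have "pd v H z = pd v (\<lambda>y. (h 1 1 y + h 2 2 y) * inverse (E y)) z"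
    by (rule pd_cong[OF open_S z]) (simp add: meanH_conformal divide_inverse)
  also have "\<dots> = (h 1 1 z + h 2 2 z) * - (inverse (E z) * pd v E z * inverse (E z))
      + (pd v (h 1 1) z + pd v (h 2 2) z) * inverse (E z)"
    using open_S z smooth_sff smooth_on_inverse[OF open_S smooth_E E_nonzero]
    by (simp add: pd_inverse[OF open_S z smooth_E E_nonzero[OF z]])
  finally show ?thesis
    by (simp add: divide_inverse power2_eq_square algebra_simps)
qed

lemma hopf_conformal:
  "y \<in> S \<Longrightarrow> hopf y = complex_of_real ((h 1 1 y - h 2 2 y) / 2) - \<i> * complex_of_real (h 1 2 y)"
  unfolding hopf_def by (simp only: sff0_conformal)

lemma smooth_hopf: "smooth_on S hopf"
  by (rule smooth_on_cong[OF open_S _ _, of "\<lambda>y. complex_of_real ((h 1 1 y - h 2 2 y) / 2)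
      - \<i> * complex_of_real (h 1 2 y)"]) (simp_all add: hopf_conformal open_S smooth_sff)

lemma dzbar_hopf:
  assumes z: "z \<in> S"
  shows "dzbar hopf z = complex_of_real (E z / 2) * dz (\<lambda>y. complex_of_real (H y)) z"
proof -
  have pd_hopf: "pd v hopf z = complex_of_real ((pd v (h 1 1) z - pd v (h 2 2) z) / 2)
      - \<i> * complex_of_real (pd v (h 1 2) z)" for v
    using open_S z smooth_sff by (simp add: pd_cong[OF open_S z hopf_conformal])
  have dz_H: "dz (\<lambda>y. complex_of_real (H y)) z
      = (complex_of_real (pd 1 H z) - \<i> * complex_of_real (pd \<i> H z)) / 2"
    unfolding dz_def using open_S z smooth_meanH by simp
  have codazzi: "pd \<i> (h 1 2) z = pd 1 (h 2 2) z - (h 1 1 z + h 2 2 z) * pd 1 E z / (2 * E z)"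
      "pd 1 (h 1 2) z = pd \<i> (h 1 1) z - (h 1 1 z + h 2 2 z) * pd \<i> E z / (2 * E z)"
    using codazzi_1[OF z] codazzi_2[OF z] by linarith+
  have "(pd 1 (h 1 1) z - pd 1 (h 2 2) z) / 2 + pd \<i> (h 1 2) z = E z * pd 1 H z / 2"
    and "(pd \<i> (h 1 1) z - pd \<i> (h 2 2) z) / 2 - pd 1 (h 1 2) z = - (E z * pd \<i> H z / 2)"
    unfolding codazzi pd_meanH[OF z] using E_nonzero[OF z] by (simp_all add: field_simps power2_eq_square)
  then show ?thesis
    unfolding dzbar_def pd_hopf dz_H by (simp add: complex_eq_iff field_simps)
qed

lemma dzbar_dz_meanH:
  assumes z: "z \<in> S" and willmore: "laplace_g f H z + normA0sq f \<nu> z * H z = 0"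
  shows "dzbar (dz (\<lambda>y. complex_of_real (H y))) z
    = - complex_of_real (H z / (2 * E z)) * cnj (hopf z) * hopf z"
proof -
  have "(pd 1 (pd 1 H) z + pd \<i> (pd \<i> H) z) / 4
      = E z / 4 * ((pd 1 (pd 1 H) z + pd \<i> (pd \<i> H) z) / E z)"
    using E_nonzero[OF z] by simp
  also have "\<dots> = E z / 4 * laplace_g f H z"
    by (simp add: laplace_g_conformal[OF z])
  also have "\<dots> = - E z / 4 * normA0sq f \<nu> z * H z"
    using willmore by (simp add: eq_neg_iff_add_eq_0[symmetric])
  also have "\<dots> = - (H z / (2 * E z)) * (cmod (hopf z))\<^sup>2"
    using E_nonzero[OF z] by (simp add: normA0sq_conformal[OF z] power2_eq_square field_simps)
  finally have "(pd 1 (pd 1 H) z + pd \<i> (pd \<i> H) z) / 4 = - (H z / (2 * E z)) * (cmod (hopf z))\<^sup>2" .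
  moreover have "cnj (hopf z) * hopf z = complex_of_real ((cmod (hopf z))\<^sup>2)"
    by (metis complex_norm_square mult.commute)
  ultimately show ?thesis
    unfolding dzbar_dz_of_real[OF open_S z smooth_meanH] mult.assoc by simp
qed

end

lemma smooth_on_antidiagonal:
  fixes a b :: "complex \<Rightarrow> 'a::euclidean_space"
  assumes "open S" "smooth_on S a" "smooth_on S b"
  shows "smooth_on S (\<lambda>y. vector [vector [0, a y], vector [b y, 0]] :: 'a^2^2)"
proof -
  have "linear (\<lambda>c. vector [vector [0, c], vector [0, 0]] :: 'a^2^2)"
    "linear (\<lambda>c. vector [vector [0, 0], vector [c, 0]] :: 'a^2^2)"
    by (rule linearI; simp add: vec_eq_iff forall_2)+
  then have lin: "bounded_linear (\<lambda>c. vector [vector [0, c], vector [0, 0]] :: 'a^2^2)"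
    "bounded_linear (\<lambda>c. vector [vector [0, 0], vector [c, 0]] :: 'a^2^2)"
    by (simp_all add: linear_conv_bounded_linear)
  have "(\<lambda>y. vector [vector [0, a y], vector [b y, 0]] :: 'a^2^2)
      = (\<lambda>y. vector [vector [0, a y], vector [0, 0]] + vector [vector [0, 0], vector [b y, 0]])"
    by (simp add: vec_eq_iff forall_2 fun_eq_iff)
  then show ?thesis
    using smooth_on_linear[OF assms(1) lin(1) assms(2)] smooth_on_linear[OF assms(1) lin(2) assms(3)]
      assms(1) by simp
qed

lemma antidiagonal_mult_vector:
  "(vector [vector [0, a], vector [b, 0]] :: 'a::semiring_1^2^2) *v vector [x, y] = vector [a * y, b * x]"
  by (simp add: vec_eq_iff forall_2 matrix_vector_mult_def sum_2)

theorem proposition2p2: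
  fixes f \<nu> :: "complex \<Rightarrow> real^3" and u :: "complex \<Rightarrow> real"
  assumes "willmore_on (ball 0 1) f"
    and "conformal_with (ball 0 1) f u"
    and "unit_normal_on (ball 0 1) f \<nu>"
  shows "\<exists>M :: complex \<Rightarrow> complex^2^2. smooth_on (ball 0 1) M \<and>
    (\<forall>z\<in>ball 0 1.
      (let \<phi> = (\<lambda>y. complex_of_real (sff0 f \<nu> 1 1 y) - \<i> * complex_of_real (sff0 f \<nu> 1 2 y));
           Hz = dz (\<lambda>y. complex_of_real (meanH f \<nu> y))
       in vector [dzbar \<phi> z, dzbar Hz z] = M z *v vector [\<phi> z, Hz z]))"
proof -
  interpret conformal_chart "ball 0 1" f \<nu> u
    using assms by unfold_locales (auto simp: willmore_on_def immersion_on_def)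
  define M :: "complex \<Rightarrow> complex^2^2" where "M y = vector [vector [0, complex_of_real (E y / 2)],
    vector [- complex_of_real (H y / (2 * E y)) * cnj (hopf y), 0]]" for y
  have "smooth_on (ball 0 1) M"
    unfolding M_def using E_nonzero
    by (intro smooth_on_antidiagonal smooth_on_of_real smooth_on_mult smooth_on_minus smooth_on_cnj
        smooth_on_divide smooth_on_const smooth_E smooth_meanH smooth_hopf) auto
  moreover have "vector [dzbar hopf z, dzbar (dz (\<lambda>y. complex_of_real (H y))) z]
      = M z *v vector [hopf z, dz (\<lambda>y. complex_of_real (H y)) z]" if "z \<in> ball 0 1" for z
  proof -
    have willmore: "laplace_g f H z + normA0sq f \<nu> z * H z = 0"
      using assms(1,3) that unfolding willmore_on_def by blast
    show ?thesis
      unfolding M_def antidiagonal_mult_vector dzbar_hopf[OF that] dzbar_dz_meanH[OF that willmore]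
      by (rule refl)
  qed
  ultimately show ?thesis
    unfolding Let_def hopf_def[abs_def, symmetric] by blast
qed

end
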